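(* The graph property $3\text{-}\mathsf{COLORABLE}$ does not belong to $\mathrm{LP}$.
   Context: Graphs. All graphs are finite, nonempty, simple, undirected and connected, and labeled: a graph is a triple $G=(V(G),E(G),\lambda_G)$ with labeling $\lambda_G:V(G)\to\{0,1\}^*$. A graph property is a set of graphs closed under label-preserving isomorphism. $3\text{-}\mathsf{COLORABLE}$ is the set of graphs $G$ admitting $f:V(G)\to\{0,1,2\}$ with $f(u)\ne f(v)$ for every edge $\{u,v\}$ (labels irrelevant). Identifiers. An identifier assignment of $G$ is a map $\mathrm{id}:V(G)\to\{0,1\}^*$; it is $r$-locally unique if $\mathrm{id}(u)\neq\mathrm{id}(v)$ for all distinct nodes $u,v$ at distance at most $2r$. Identifiers are ordered lexicographically (a proper prefix is smaller). Distributed Turing machines. Such a machine $M$ is a Turing machine with three one-way-infinite tapes (receiving, internal, sending) over the alphabet $\{\vdash,\square,\#,0,1\}$ (left-end marker, blank, separator, bits), with designated states start, pause, stop. It is executed on a graph $G$ under an (at least $1$-locally unique) identifier assignment $\mathrm{id}$: every node runs its own copy of $M$ in synchronous rounds. In each round, a node $u$ whose neighbors are $v_1,\dots,v_d$ in increasing identifier order (i) gets $m_1\#\cdots\#m_d\#$ on its receiving tape, where $m_i$ is the message sent to it by $v_i$ in the previous round (empty in the first round); (ii) its sending tape is emptied, its internal tape is initialized to $\lambda_G(u)\#\mathrm{id}(u)\#$ in the first round and otherwise keeps its content, and, unless $u$ reached stop in an earlier round, $M$ runs from state start with all heads leftmost until it enters pause or stop; (iii) $u$ sends to $v_i$ the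 $i$-th $\#$-separated bit string on its sending tape (the empty string if there is none). The execution terminates once all nodes are in stop; $G$ is accepted if at that point every node has exactly the bit string $1$ on its internal tape (symbols other than $0,1$ ignored). A local-polynomial machine is a distributed Turing machine for which there are a constant $c$ and a polynomial $q$ such that, on every graph and under all identifier assignments, all nodes reach stop within $c$ rounds, and in every round every node makes at most $q(n)$ computation steps, $n$ being the total length of its receiving- and internal-tape contents at the beginning of the round. $\mathrm{LP}$ is the class of graph properties $P$ for which there are a local-polynomial machine $M$ and a constant $r_{\mathrm{id}}\ge1$ such that for every graph $G$ and every $r_{\mathrm{id}}$-locally unique identifier assignment $\mathrm{id}$, $M$ accepts $G$ under $\mathrm{id}$ iff $G\in P$. *)

theory Defs
  imports Main "HOL-Computational_Algebra.Polynomial"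
begin

text \<open>Vertices are natural numbers (every finite graph is isomorphic to one of this form).
  Labels and identifiers are bit strings, represented as bool lists (False = 0, True = 1).\<close>

record graph =
  gverts :: "nat set"
  gadj   :: "nat \<Rightarrow> nat \<Rightarrow> bool"
  glab   :: "nat \<Rightarrow> bool list"

definition wf_graph :: "graph \<Rightarrow> bool" where
  "wf_graph G \<longleftrightarrow>
     finite (gverts G) \<and> gverts G \<noteq> {} \<and>
     (\<forall>u v. gadj G u v \<longrightarrow> u \<in> gverts G \<and> v \<in> gverts G) \<and>
     (\<forall>u v. gadj G u v \<longrightarrow> gadj G v u) \<and>
     (\<forall>u. \<not> gadj G u u) \<and>
     (\<forall>u\<in>gverts G. \<forall>v\<in>gverts G. (gadj G)\<^sup>*\<^sup>* u v)"

definition graph_iso :: "graph \<Rightarrow> graph \<Rightarrow> (nat \<Rightarrow> nat) \<Rightarrow> bool" where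
  "graph_iso G H f \<longleftrightarrow>
     bij_betw f (gverts G) (gverts H) \<and>
     (\<forall>u\<in>gverts G. \<forall>v\<in>gverts G. gadj G u v \<longleftrightarrow> gadj H (f u) (f v)) \<and>
     (\<forall>u\<in>gverts G. glab H (f u) = glab G u)"

definition graph_property :: "graph set \<Rightarrow> bool" where
  "graph_property P \<longleftrightarrow>
     (\<forall>G\<in>P. wf_graph G) \<and>
     (\<forall>G H f. G \<in> P \<and> wf_graph H \<and> graph_iso G H f \<longrightarrow> H \<in> P)"

definition three_colorable :: "graph set" where
  "three_colorable = {G. wf_graph G \<and>
     (\<exists>f :: nat \<Rightarrow> nat. (\<forall>u\<in>gverts G. f u < 3) \<and>
        (\<forall>u v. gadj G u v \<longrightarrow> f u \<noteq> f v))}"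

text \<open>Lexicographic order on bit strings; a proper prefix is smaller.\<close>
definition id_less :: "bool list \<Rightarrow> bool list \<Rightarrow> bool" where
  "id_less a b \<longleftrightarrow> (a, b) \<in> lexord {(x, y). x = False \<and> y = True}"

definition locally_unique :: "nat \<Rightarrow> graph \<Rightarrow> (nat \<Rightarrow> bool list) \<Rightarrow> bool" where
  "locally_unique r G idf \<longleftrightarrow>
     (\<forall>u\<in>gverts G. \<forall>v\<in>gverts G. u \<noteq> v \<and> (\<exists>k\<le>2*r. (gadj G ^^ k) u v)
        \<longrightarrow> idf u \<noteq> idf v)"

definition nbrs :: "graph \<Rightarrow> (nat \<Rightarrow> bool list) \<Rightarrow> nat \<Rightarrow> nat list" where
  "nbrs G idf u = (SOME xs. distinct xs \<and> set xs = {v \<in> gverts G. gadj G u v} \<and>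
                      sorted_wrt (\<lambda>a b. id_less (idf a) (idf b)) xs)"

text \<open>Symbols: left-end marker, blank, separator #, bits 0 and 1.\<close>
datatype sym = LEnd | Blank | Sep | Zero | One

datatype move = MvL | MvR | MvS

record dtm =
  tm_states :: "nat set"
  tm_start  :: nat
  tm_pause  :: nat
  tm_stop   :: nat
  tm_delta  :: "nat \<Rightarrow> sym \<Rightarrow> sym \<Rightarrow> sym \<Rightarrow> nat \<times> (sym \<times> move) \<times> (sym \<times> move) \<times> (sym \<times> move)"

definition wf_dtm :: "dtm \<Rightarrow> bool" where
  "wf_dtm M \<longleftrightarrow> finite (tm_states M) \<and>
     tm_start M \<in> tm_states M \<and> tm_pause M \<in> tm_states M \<and> tm_stop M \<in> tm_states M \<and>
     tm_start M \<noteq> tm_pause M \<and> tm_start M \<noteq> tm_stop M \<and> tm_pause M \<noteq> tm_stop M \<and>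
     (\<forall>q\<in>tm_states M. \<forall>a b c. fst (tm_delta M q a b c) \<in> tm_states M)"

text \<open>A one-way infinite tape: the list holds cells 1, 2, ...; cell 0 holds the left-end
  marker; all cells beyond the list are blank. The nat is the head position.\<close>
type_synonym tape = "sym list \<times> nat"

definition tape_read :: "tape \<Rightarrow> sym" where
  "tape_read t = (let (xs, h) = t in
     if h = 0 then LEnd else if h \<le> length xs then xs ! (h - 1) else Blank)"

definition tape_act :: "tape \<Rightarrow> sym \<times> move \<Rightarrow> tape" where
  "tape_act t a = (let (xs, h) = t; (s, m) = a;
     xs' = (if h = 0 then xs else (xs @ replicate (h - length xs) Blank)[h - 1 := s]);
     h' = (case m of MvL \<Rightarrow> h - 1 | MvR \<Rightarrow> h + 1 | MvS \<Rightarrow> h)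
   in (xs', h'))"

type_synonym config = "nat \<times> tape \<times> tape \<times> tape"

definition halted :: "dtm \<Rightarrow> config \<Rightarrow> bool" where
  "halted M c \<longleftrightarrow> fst c = tm_pause M \<or> fst c = tm_stop M"

definition tm_step :: "dtm \<Rightarrow> config \<Rightarrow> config" where
  "tm_step M c = (if halted M c then c else
     (let (q, t1, t2, t3) = c;
          (q', a1, a2, a3) = tm_delta M q (tape_read t1) (tape_read t2) (tape_read t3)
      in (q', tape_act t1 a1, tape_act t2 a2, tape_act t3 a3)))"

text \<open>One round of computation of a single node: receiving tape R, internal tape I,
  empty sending tape, all heads leftmost, starting in the start state.\<close>
definition run_round :: "dtm \<Rightarrow> sym list \<Rightarrow> sym list \<Rightarrow> (nat \<times> config) option" where
  "run_round M R I = (let c0 = (tm_start M, (R, 0), (I, 0), ([], 0)) in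
     if \<exists>k. halted M ((tm_step M ^^ k) c0)
     then (let k = (LEAST k. halted M ((tm_step M ^^ k) c0)) in Some (k, (tm_step M ^^ k) c0))
     else None)"

text \<open>Tape contents: trailing blanks are not part of the content.\<close>
definition strip :: "sym list \<Rightarrow> sym list" where
  "strip xs = rev (dropWhile (\<lambda>s. s = Blank) (rev xs))"

definition enc :: "bool list \<Rightarrow> sym list" where
  "enc bs = map (\<lambda>b. if b then One else Zero) bs"

definition bits_of :: "sym list \<Rightarrow> bool list" where
  "bits_of xs = map (\<lambda>s. s = One) (filter (\<lambda>s. s = Zero \<or> s = One) xs)"

fun split_sep :: "sym list \<Rightarrow> sym list list" where
  "split_sep [] = [[]]"
| "split_sep (s # xs) = (if s = Sep then [] # split_sep xs
                         else (let ys = split_sep xs in (s # hd ys) # tl ys))"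

text \<open>The j-th (0-based) #-separated bit string on a sending tape (empty if there is none);
  symbols other than 0, 1, # are ignored.\<close>
definition out_msg :: "sym list \<Rightarrow> nat \<Rightarrow> bool list" where
  "out_msg xs j = (let ps = split_sep (filter (\<lambda>s. s = Zero \<or> s = One \<or> s = Sep) xs) in
     if j < length ps then bits_of (ps ! j) else [])"

record nstate =
  ns_int  :: "sym list"
  ns_stop :: bool
  ns_send :: "sym list"

text \<open>Message sent by v to its neighbour u in the previous round.\<close>
definition msg_from :: "graph \<Rightarrow> (nat \<Rightarrow> bool list) \<Rightarrow> (nat \<Rightarrow> nstate) \<Rightarrow> nat \<Rightarrow> nat \<Rightarrow> bool list" where
  "msg_from G idf S v u = (let ns = nbrs G idf v in
     case [j. j \<leftarrow> [0..<length ns], ns ! j = u] of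
       [] \<Rightarrow> []
     | j # _ \<Rightarrow> out_msg (ns_send (S v)) j)"

definition recv_tape :: "graph \<Rightarrow> (nat \<Rightarrow> bool list) \<Rightarrow> (nat \<Rightarrow> nstate) \<Rightarrow> nat \<Rightarrow> sym list" where
  "recv_tape G idf S u = concat (map (\<lambda>v. enc (msg_from G idf S v u) @ [Sep]) (nbrs G idf u))"

definition init_state :: "graph \<Rightarrow> (nat \<Rightarrow> bool list) \<Rightarrow> nat \<Rightarrow> nstate" where
  "init_state G idf u = \<lparr>ns_int = enc (glab G u) @ [Sep] @ enc (idf u) @ [Sep],
                          ns_stop = False, ns_send = []\<rparr>"

definition node_round :: "dtm \<Rightarrow> graph \<Rightarrow> (nat \<Rightarrow> bool list) \<Rightarrow> (nat \<Rightarrow> nstate) \<Rightarrow> nat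
    \<Rightarrow> (nat \<times> nstate) option" where
  "node_round M G idf S u =
     (if ns_stop (S u) then Some (0, (S u)\<lparr>ns_send := []\<rparr>)
      else (case run_round M (recv_tape G idf S u) (strip (ns_int (S u))) of
              None \<Rightarrow> None
            | Some (k, (q, t1, t2, t3)) \<Rightarrow>
                Some (k, \<lparr>ns_int = strip (fst t2), ns_stop = (q = tm_stop M),
                          ns_send = fst t3\<rparr>)))"

fun exec :: "dtm \<Rightarrow> graph \<Rightarrow> (nat \<Rightarrow> bool list) \<Rightarrow> nat \<Rightarrow> (nat \<Rightarrow> nstate) option" where
  "exec M G idf 0 = Some (init_state G idf)"
| "exec M G idf (Suc r) = (case exec M G idf r of
      None \<Rightarrow> None
    | Some S \<Rightarrow> (if \<forall>u\<in>gverts G. node_round M G idf S u \<noteq> None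
                 then Some (\<lambda>u. snd (the (node_round M G idf S u))) else None))"

definition accepts :: "dtm \<Rightarrow> graph \<Rightarrow> (nat \<Rightarrow> bool list) \<Rightarrow> bool" where
  "accepts M G idf \<longleftrightarrow> (\<exists>r S. exec M G idf r = Some S \<and>
      (\<forall>u\<in>gverts G. ns_stop (S u)) \<and>
      (\<forall>u\<in>gverts G. bits_of (ns_int (S u)) = [True]))"

definition local_polynomial :: "dtm \<Rightarrow> bool" where
  "local_polynomial M \<longleftrightarrow> (\<exists>(c::nat) (q::nat poly). \<forall>G idf.
     wf_graph G \<and> locally_unique 1 G idf \<longrightarrow>
       (\<exists>S. exec M G idf c = Some S \<and> (\<forall>u\<in>gverts G. ns_stop (S u))) \<and>
       (\<forall>r S u. exec M G idf r = Some S \<and> u \<in> gverts G \<and> \<not> ns_stop (S u) \<longrightarrow>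
          (\<exists>k ns. node_round M G idf S u = Some (k, ns) \<and>
             k \<le> poly q (length (recv_tape G idf S u) + length (strip (ns_int (S u)))))))"

definition LP :: "graph set set" where
  "LP = {P. graph_property P \<and>
     (\<exists>M r_id. wf_dtm M \<and> local_polynomial M \<and> r_id \<ge> 1 \<and>
        (\<forall>G idf. wf_graph G \<and> locally_unique r_id G idf \<longrightarrow>
           (accepts M G idf \<longleftrightarrow> G \<in> P)))}"

end

theory Submission
  imports Defs "HOL-Library.List_Lexorder" "HOL-Number_Theory.Cong"
begin

text \<open>Let \<open>C\<^sub>N\<^sup>2\<close> be the square of the \<open>N\<close>-cycle. Its proper 3-colourings are 3-periodic along
  the cycle, so \<open>C\<^sub>N\<^sup>2\<close> is 3-colourable iff \<open>3 dvd N\<close>. Reduction mod \<open>n\<close> is a covering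
  map \<open>C\<^sub>3\<^sub>n\<^sup>2 \<rightarrow> C\<^sub>n\<^sup>2\<close> (for \<open>n \<ge> 5\<close>) that is a bijection on every neighbourhood.
  Pulling injective identifiers of \<open>C\<^sub>n\<^sup>2\<close> back along it gives identifiers that are
  \<open>r\<close>-locally unique once \<open>n > 4r\<close>, and then by induction on the rounds every node of the
  cover receives and stores exactly what its image receives and stores. Hence a machine
  deciding 3-colourability would accept \<open>C\<^sub>n\<^sup>2\<close> with \<open>n = 6r + 7\<close> because it accepts the
  3-colourable cover \<open>C\<^sub>3\<^sub>n\<^sup>2\<close>.\<close>

lemma id_less_iff_less: "id_less a b \<longleftrightarrow> a < b"
proof -
  have "{(x, y). x = False \<and> y = True} = {(u, v). (u::bool) < v}" by auto
  then show ?thesis by (simp only: id_less_def list_less_def)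
qed

definition neighbours :: "graph \<Rightarrow> nat \<Rightarrow> nat set" where
  "neighbours G u = {v \<in> gverts G. gadj G u v}"

abbreviation sorted_by_id :: "(nat \<Rightarrow> bool list) \<Rightarrow> nat list \<Rightarrow> bool" where
  "sorted_by_id idf \<equiv> sorted_wrt (\<lambda>a b. id_less (idf a) (idf b))"

lemma sorted_by_id_iff: "sorted_by_id idf xs \<longleftrightarrow> sorted_wrt (<) (map idf xs)"
  by (simp add: sorted_wrt_map id_less_iff_less)

lemma sorted_by_id_unique:
  assumes "sorted_by_id idf xs" "sorted_by_id idf ys" "set xs = set ys"
  shows "xs = ys"
proof (rule map_inj_on)
  have "sorted_wrt (<) (map idf xs)" "sorted_wrt (<) (map idf ys)"
    using assms(1,2) by (simp_all add: sorted_by_id_iff)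
  then show "map idf xs = map idf ys"
    using assms(3) by (intro strict_sorted_equal) auto
  have "distinct (map idf xs)"
    using \<open>sorted_wrt (<) (map idf xs)\<close> by (simp add: strict_sorted_iff)
  then show "inj_on idf (set xs \<union> set ys)"
    using assms(3) by (simp add: distinct_map)
qed

lemma nbrs_eqI:
  assumes "distinct xs" "set xs = neighbours G u" "sorted_by_id idf xs"
  shows "nbrs G idf u = xs"
proof -
  let ?P = "\<lambda>xs. distinct xs \<and> set xs = neighbours G u \<and> sorted_by_id idf xs"
  have "?P (nbrs G idf u)"
    unfolding nbrs_def neighbours_def[symmetric] by (rule someI[of ?P xs]) (use assms in auto)
  then show ?thesis
    using assms by (intro sorted_by_id_unique[of idf]) auto
qed

lemma nbrs_spec:
  assumes "finite (neighbours G u)" "inj_on idf (neighbours G u)"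
  shows "distinct (nbrs G idf u) \<and> set (nbrs G idf u) = neighbours G u \<and>
    sorted_by_id idf (nbrs G idf u)"
proof -
  define xs where "xs = sort_key idf (sorted_list_of_set (neighbours G u))"
  have xs: "distinct xs" "set xs = neighbours G u"
    using assms(1) by (auto simp: xs_def)
  have "sorted (map idf xs)" by (simp add: xs_def)
  moreover have "distinct (map idf xs)" using xs assms(2) by (simp add: distinct_map)
  ultimately have "sorted_by_id idf xs" by (simp add: sorted_by_id_iff strict_sorted_iff)
  then show ?thesis using xs nbrs_eqI[OF xs] by simp
qed

definition graph_covering :: "graph \<Rightarrow> graph \<Rightarrow> (nat \<Rightarrow> nat) \<Rightarrow> bool" where
  "graph_covering G H p \<longleftrightarrow> p ` gverts G = gverts H \<and>
     (\<forall>u\<in>gverts G. glab G u = glab H (p u) \<and>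
        bij_betw p (neighbours G u) (neighbours H (p u)))"

locale covering_with_ids =
  fixes G H :: graph and p :: "nat \<Rightarrow> nat" and idG idH :: "nat \<Rightarrow> bool list"
  assumes covering: "graph_covering G H p"
    and sym_G: "\<And>u v. gadj G u v \<Longrightarrow> gadj G v u"
    and finite_H: "finite (gverts H)"
    and inj_idH: "\<And>w. inj_on idH (neighbours H w)"
    and idG_lift: "\<And>u. u \<in> gverts G \<Longrightarrow> idG u = idH (p u)"
begin

lemma image_verts: "p ` gverts G = gverts H"
  and label_eq: "u \<in> gverts G \<Longrightarrow> glab G u = glab H (p u)"
  and bij_neighbours: "u \<in> gverts G \<Longrightarrow> bij_betw p (neighbours G u) (neighbours H (p u))"
  using covering by (auto simp: graph_covering_def)

lemma nbrs_cover_spec: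
  assumes "u \<in> gverts G"
  shows "distinct (nbrs G idG u) \<and> set (nbrs G idG u) = neighbours G u \<and>
    sorted_by_id idG (nbrs G idG u)"
proof (rule nbrs_spec)
  have bij: "bij_betw p (neighbours G u) (neighbours H (p u))"
    using bij_neighbours[OF assms] .
  have "finite (neighbours H (p u))"
    using finite_H by (simp add: neighbours_def)
  then show "finite (neighbours G u)"
    using bij bij_betw_finite by blast
  have "inj_on (idH \<circ> p) (neighbours G u)"
    using bij inj_idH by (auto simp: bij_betw_def intro: comp_inj_on)
  then show "inj_on idG (neighbours G u)"
    by (rule inj_on_cong[THEN iffD1, rotated]) (simp add: idG_lift neighbours_def)
qed

lemma nbrs_base_eq_map:
  assumes "u \<in> gverts G"
  shows "nbrs H idH (p u) = map p (nbrs G idG u)"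
proof (rule nbrs_eqI)
  let ?xs = "nbrs G idG u"
  have bij: "bij_betw p (neighbours G u) (neighbours H (p u))"
    using bij_neighbours[OF assms] .
  have xs: "distinct ?xs" "set ?xs = neighbours G u" "sorted_by_id idG ?xs"
    using nbrs_cover_spec[OF assms] by blast+
  show "distinct (map p ?xs)"
    using xs bij by (simp add: distinct_map bij_betw_def)
  show "set (map p ?xs) = neighbours H (p u)"
    using xs bij by (simp add: bij_betw_def)
  have "sorted_by_id (idH \<circ> p) ?xs"
    using xs(3) by (rule sorted_wrt_mono_rel[rotated]) (use xs(2) in \<open>auto simp: idG_lift neighbours_def\<close>)
  then show "sorted_by_id idH (map p ?xs)"
    by (simp add: sorted_wrt_map)
qed

lemma msg_from_base_eq:
  assumes "u \<in> neighbours G v" "v \<in> gverts G" "\<forall>x\<in>gverts G. SG x = SH (p x)"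
  shows "msg_from H idH SH (p v) (p u) = msg_from G idG SG v u"
proof -
  let ?ns = "nbrs G idG v"
  have set_ns: "set ?ns = neighbours G v"
    using nbrs_cover_spec[OF assms(2)] by blast
  have "p (?ns ! i) = p u \<longleftrightarrow> ?ns ! i = u" if "i < length ?ns" for i
    using bij_neighbours[OF assms(2)] assms(1) set_ns nth_mem[OF that]
    by (auto simp: bij_betw_def dest: inj_onD)
  then have positions: "[i. i \<leftarrow> [0..<length ?ns], map p ?ns ! i = p u] =
      [i. i \<leftarrow> [0..<length ?ns], ?ns ! i = u]"
    by (intro arg_cong[where f = concat] map_cong) auto
  have state: "SH (p v) = SG v"
    using assms(2,3) by simp
  show ?thesis
    unfolding msg_from_def Let_def nbrs_base_eq_map[OF assms(2)] length_map positions state ..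
qed

lemma recv_tape_base_eq:
  assumes "u \<in> gverts G" "\<forall>x\<in>gverts G. SG x = SH (p x)"
  shows "recv_tape H idH SH (p u) = recv_tape G idG SG u"
proof -
  have "msg_from H idH SH (p v) (p u) = msg_from G idG SG v u"
    if "v \<in> set (nbrs G idG u)" for v
  proof (rule msg_from_base_eq[OF _ _ assms(2)])
    have "v \<in> neighbours G u"
      using that nbrs_cover_spec[OF assms(1)] by blast
    then show "v \<in> gverts G" "u \<in> neighbours G v"
      using assms(1) sym_G by (auto simp: neighbours_def)
  qed
  then show ?thesis
    unfolding recv_tape_def nbrs_base_eq_map[OF assms(1)] map_map
    by (intro arg_cong[where f = concat] map_cong) auto
qed

lemma exec_project:
  "exec M G idG r = Some SG \<Longrightarrow>
     \<exists>SH. exec M H idH r = Some SH \<and> (\<forall>u\<in>gverts G. SG u = SH (p u))"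
proof (induction r arbitrary: SG)
  case 0
  then show ?case by (auto simp: init_state_def label_eq idG_lift)
next
  case (Suc r)
  then obtain S where S: "exec M G idG r = Some S"
    by (cases "exec M G idG r") auto
  then obtain SH where SH: "exec M H idH r = Some SH" "\<forall>u\<in>gverts G. S u = SH (p u)"
    using Suc.IH by blast
  have node_round_eq: "node_round M H idH SH (p u) = node_round M G idG S u"
    if "u \<in> gverts G" for u
    using that SH(2) by (simp add: node_round_def recv_tape_base_eq)
  have halts: "\<forall>u\<in>gverts G. node_round M G idG S u \<noteq> None"
    and SG: "SG = (\<lambda>u. snd (the (node_round M G idG S u)))"
    using Suc.prems S by (auto split: if_splits)
  have "\<forall>w\<in>gverts H. node_round M H idH SH w \<noteq> None"
  proof
    fix w assume "w \<in> gverts H"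
    then obtain u where "u \<in> gverts G" "w = p u"
      using image_verts by blast
    then show "node_round M H idH SH w \<noteq> None"
      using halts node_round_eq by simp
  qed
  then show ?case
    using SH(1) SG node_round_eq by auto
qed

lemma accepts_project:
  assumes "accepts M G idG"
  shows "accepts M H idH"
proof -
  obtain r SG where SG: "exec M G idG r = Some SG"
    "\<forall>u\<in>gverts G. ns_stop (SG u)" "\<forall>u\<in>gverts G. bits_of (ns_int (SG u)) = [True]"
    using assms by (auto simp: accepts_def)
  obtain SH where SH: "exec M H idH r = Some SH" "\<forall>u\<in>gverts G. SG u = SH (p u)"
    using exec_project[OF SG(1)] by blast
  have "ns_stop (SH w) \<and> bits_of (ns_int (SH w)) = [True]" if "w \<in> gverts H" for w
    using that SG(2,3) SH(2) image_verts[symmetric] by auto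
  then show ?thesis
    using SH(1) unfolding accepts_def by blast
qed

end

lemma eq_if_cong_small_offset:
  fixes a b m n :: nat and d :: int
  assumes "a < m * n" "b < m * n" "a mod n = b mod n"
    and "[int b = int a + d] (mod int (m * n))" "\<bar>d\<bar> < int n"
  shows "a = b"
proof -
  have "[int b = int a + d] (mod int n)"
    using assms(4) by (rule cong_dvd_modulus) simp
  moreover have "[b = a] (mod n)"
    using assms(3) by (simp add: cong_def)
  then have "[int b = int a] (mod int n)"
    by (simp add: cong_int_iff)
  ultimately have "[int a + d = int a] (mod int n)"
    using cong_sym cong_trans by blast
  then have "int n dvd d"
    by (simp add: cong_add_lcancel_0 cong_0_iff)
  then have "d = 0"
    using assms(5) dvd_imp_le_int[of d "int n"] by linarith
  then have "[b = a] (mod m * n)"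
    using assms(4) cong_int_iff[of b a "m * n"] by simp
  then show ?thesis
    using assms(1,2) cong_less_modulus_unique_nat by (metis cong_sym)
qed

definition cycle_square :: "nat \<Rightarrow> graph" where
  "cycle_square N = \<lparr>gverts = {..<N},
     gadj = (\<lambda>u v. u < N \<and> v < N \<and> (\<exists>d\<in>{-2, -1, 1, 2}. [int v = int u + d] (mod int N))),
     glab = (\<lambda>_. [])\<rparr>"

lemma cycle_square_simps [simp]:
  "gverts (cycle_square N) = {..<N}"
  "glab (cycle_square N) u = []"
  by (simp_all add: cycle_square_def)

lemma cycle_square_adj:
  "gadj (cycle_square N) u v \<longleftrightarrow>
     u < N \<and> v < N \<and> (\<exists>d\<in>{-2, -1, 1, 2}. [int v = int u + d] (mod int N))"
  by (simp add: cycle_square_def)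

lemma cycle_square_sym:
  assumes "gadj (cycle_square N) u v"
  shows "gadj (cycle_square N) v u"
proof -
  obtain d where d: "d \<in> {-2, -1, 1, 2}" "[int v = int u + d] (mod int N)" "u < N" "v < N"
    using assms unfolding cycle_square_adj by blast
  have "[int u = int v + - d] (mod int N)"
    using cong_add[OF d(2) cong_refl[of "- d"]] by (simp add: cong_sym_eq)
  moreover have "- d \<in> {-2, -1, 1, 2}" using d(1) by auto
  ultimately show ?thesis using d(3,4) unfolding cycle_square_adj by blast
qed

lemma cycle_square_irrefl:
  assumes "N \<ge> 3"
  shows "\<not> gadj (cycle_square N) u u"
proof
  assume "gadj (cycle_square N) u u"
  then obtain d :: int where d: "d \<in> {-2, -1, 1, 2}" "[int u + d = int u] (mod int N)"
    unfolding cycle_square_adj by (blast intro: cong_sym)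
  have "d \<noteq> 0" "\<bar>d\<bar> \<le> 2"
    using d(1) by auto
  have "int N dvd d"
    using d(2) by (simp add: cong_add_lcancel_0 cong_0_iff)
  then have "int N \<le> \<bar>d\<bar>"
    using dvd_imp_le_int[OF \<open>d \<noteq> 0\<close>, of "int N"] by simp
  then show False
    using \<open>\<bar>d\<bar> \<le> 2\<close> assms by linarith
qed

lemma cycle_square_connected:
  assumes "v < N"
  shows "(gadj (cycle_square N))\<^sup>*\<^sup>* 0 v"
  using assms
proof (induction v)
  case (Suc v)
  have "[int (Suc v) = int v + 1] (mod int N)" by (simp add: ac_simps)
  moreover have "(1::int) \<in> {-2, -1, 1, 2}" by simp
  ultimately have "gadj (cycle_square N) v (Suc v)"
    using Suc.prems unfolding cycle_square_adj by (meson Suc_lessD)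
  with Suc show ?case by (simp add: rtranclp.rtrancl_into_rtrancl)
qed simp

lemma wf_cycle_square:
  assumes "N \<ge> 3"
  shows "wf_graph (cycle_square N)"
  unfolding wf_graph_def
proof (intro conjI allI impI ballI)
  have "0 \<in> gverts (cycle_square N)"
    using assms by simp
  then show "gverts (cycle_square N) \<noteq> {}"
    by blast
  have "symp (gadj (cycle_square N))"
    by (blast intro: sympI cycle_square_sym)
  then show "(gadj (cycle_square N))\<^sup>*\<^sup>* u v"
    if "u \<in> gverts (cycle_square N)" "v \<in> gverts (cycle_square N)" for u v
    using that cycle_square_connected[of u N] cycle_square_connected[of v N]
    by (metis lessThan_iff cycle_square_simps(1) rtranclp_trans sympD symp_rtranclp)
qed (use assms cycle_square_irrefl cycle_square_sym in \<open>auto simp: cycle_square_adj\<close>)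

lemma cycle_square_walk_offset:
  assumes "(gadj (cycle_square N) ^^ k) u v"
  shows "\<exists>d :: int. \<bar>d\<bar> \<le> 2 * int k \<and> [int v = int u + d] (mod int N)"
  using assms
proof (induction k arbitrary: v)
  case 0
  then show ?case by (auto intro!: exI[of _ 0])
next
  case (Suc k)
  from Suc.prems obtain w where w: "(gadj (cycle_square N) ^^ k) u w" "gadj (cycle_square N) w v"
    by (rule relpowp_Suc_E)
  obtain d1 where d1: "\<bar>d1\<bar> \<le> 2 * int k" "[int w = int u + d1] (mod int N)"
    using Suc.IH[OF w(1)] by blast
  obtain d2 :: int where d2: "d2 \<in> {-2, -1, 1, 2}" "[int v = int w + d2] (mod int N)"
    using w(2) unfolding cycle_square_adj by blast
  have "[int v = int u + (d1 + d2)] (mod int N)"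
    using cong_trans[OF d2(2) cong_add[OF d1(2) cong_refl[of d2]]] by (simp add: add.assoc)
  moreover have "\<bar>d1 + d2\<bar> \<le> 2 * int (Suc k)"
    using d1(1) d2(1) by auto
  ultimately show ?case by blast
qed

lemma cycle_square_mod_inj_on_walk:
  assumes "(gadj (cycle_square (m * n)) ^^ k) a b" "2 * k < n"
    and "a < m * n" "b < m * n" "a mod n = b mod n"
  shows "a = b"
proof -
  obtain d where "\<bar>d\<bar> \<le> 2 * int k" "[int b = int a + d] (mod int (m * n))"
    using cycle_square_walk_offset[OF assms(1)] by blast
  moreover have "\<bar>d\<bar> < int n" if "\<bar>d\<bar> \<le> 2 * int k"
    using that assms(2) by linarith
  ultimately show ?thesis
    using eq_if_cong_small_offset assms(3-5) by blast
qed

lemma cycle_square_mod_adj: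
  assumes "gadj (cycle_square (m * n)) a b" "n \<ge> 1"
  shows "gadj (cycle_square n) (a mod n) (b mod n)"
proof -
  obtain d :: int where d: "d \<in> {-2, -1, 1, 2}" "[int b = int a + d] (mod int (m * n))"
    using assms(1) unfolding cycle_square_adj by blast
  have "[int b = int a + d] (mod int n)"
    using d(2) by (rule cong_dvd_modulus) simp
  then have "[int (b mod n) = int (a mod n) + d] (mod int n)"
    by (simp add: cong_def of_nat_mod mod_add_left_eq)
  moreover have "a mod n < n" "b mod n < n"
    using assms(2) by simp_all
  ultimately show ?thesis
    using d(1) unfolding cycle_square_adj by blast
qed

lemma cycle_square_mod_lift:
  assumes "gadj (cycle_square n) (a mod n) w" "a < m * n"
  shows "\<exists>b. gadj (cycle_square (m * n)) a b \<and> b mod n = w"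
proof -
  obtain d :: int where d: "d \<in> {-2, -1, 1, 2}" "[int w = int (a mod n) + d] (mod int n)" "w < n"
    using assms(1) unfolding cycle_square_adj by blast
  define b where "b = nat ((int a + d) mod int (m * n))"
  have "m * n > 0" using assms(2) by linarith
  then have b: "int b = (int a + d) mod int (m * n)" "b < m * n"
    by (simp_all add: b_def nat_less_iff)
  then have "[int b = int a + d] (mod int (m * n))"
    by (simp add: cong_def)
  then have "gadj (cycle_square (m * n)) a b"
    using d(1) b(2) assms(2) unfolding cycle_square_adj by blast
  moreover have "[int b = int w] (mod int n)"
  proof -
    have "[int b = int a + d] (mod int n)"
      using b(1) by (simp add: cong_def mod_mod_cancel)
    then show ?thesis
      using d(2) by (simp add: cong_def of_nat_mod mod_add_left_eq)
  qed
  then have "[b = w] (mod n)"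
    by (simp add: cong_int_iff)
  then have "b mod n = w"
    using d(3) by (simp add: cong_def)
  ultimately show ?thesis by blast
qed

lemma cycle_square_covering:
  assumes "n \<ge> 5" "m \<ge> 1"
  shows "graph_covering (cycle_square (m * n)) (cycle_square n) (\<lambda>x. x mod n)"
  unfolding graph_covering_def
proof (intro conjI ballI)
  have "x \<in> (\<lambda>x. x mod n) ` {..<m * n}" if "x < n" for x
  proof
    show "x = x mod n" using that by simp
    have "1 * n \<le> m * n"
      using assms(2) by (rule mult_le_mono1)
    then show "x \<in> {..<m * n}"
      using that unfolding lessThan_iff by linarith
  qed
  then show "(\<lambda>x. x mod n) ` gverts (cycle_square (m * n)) = gverts (cycle_square n)"
    using assms(1) by auto
next
  fix u assume u: "u \<in> gverts (cycle_square (m * n))"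
  show "glab (cycle_square (m * n)) u = glab (cycle_square n) (u mod n)"
    by simp
  show "bij_betw (\<lambda>x. x mod n) (neighbours (cycle_square (m * n)) u)
      (neighbours (cycle_square n) (u mod n))"
  proof (rule bij_betw_imageI)
    show "inj_on (\<lambda>x. x mod n) (neighbours (cycle_square (m * n)) u)"
    proof (rule inj_onI)
      fix a b
      assume a: "a \<in> neighbours (cycle_square (m * n)) u"
        and b: "b \<in> neighbours (cycle_square (m * n)) u" and "a mod n = b mod n"
      have "gadj (cycle_square (m * n)) u a"
        using a by (simp add: neighbours_def)
      then have "gadj (cycle_square (m * n)) a u"
        by (rule cycle_square_sym)
      moreover have "gadj (cycle_square (m * n)) u b"
        using b by (simp add: neighbours_def)
      ultimately have "(gadj (cycle_square (m * n)) ^^ Suc (Suc 0)) a b"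
        by (blast intro: relpowp_Suc_I2 relpowp_0_I)
      moreover have "2 * Suc (Suc 0) < n"
        using assms(1) by simp
      moreover have "a < m * n" "b < m * n"
        using a b by (simp_all add: neighbours_def)
      ultimately show "a = b"
        using \<open>a mod n = b mod n\<close> by (rule cycle_square_mod_inj_on_walk)
    qed
    show "(\<lambda>x. x mod n) ` neighbours (cycle_square (m * n)) u = neighbours (cycle_square n) (u mod n)"
    proof (intro equalityI subsetI)
      fix w assume "w \<in> (\<lambda>x. x mod n) ` neighbours (cycle_square (m * n)) u"
      then obtain b where "gadj (cycle_square (m * n)) u b" "w = b mod n"
        by (auto simp: neighbours_def)
      then have "gadj (cycle_square n) (u mod n) w"
        using cycle_square_mod_adj assms(1) by simp
      then show "w \<in> neighbours (cycle_square n) (u mod n)"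
        using \<open>w = b mod n\<close> assms(1) by (simp add: neighbours_def)
    next
      fix w assume "w \<in> neighbours (cycle_square n) (u mod n)"
      then obtain b where b: "gadj (cycle_square (m * n)) u b" "b mod n = w"
        using cycle_square_mod_lift[of n u w m] u by (auto simp: neighbours_def)
      moreover have "b < m * n"
        using b(1) unfolding cycle_square_adj by blast
      ultimately show "w \<in> (\<lambda>x. x mod n) ` neighbours (cycle_square (m * n)) u"
        by (auto simp: neighbours_def)
    qed
  qed
qed

lemma locally_unique_if_inj_on:
  assumes "inj_on idf (gverts G)"
  shows "locally_unique r G idf"
  using assms by (auto simp: locally_unique_def dest: inj_onD)

lemma cycle_square_locally_unique_mod:
  assumes "inj idf" "4 * r < n"
  shows "locally_unique r (cycle_square (m * n)) (\<lambda>x. idf (x mod n))"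
  unfolding locally_unique_def
proof (intro ballI impI)
  fix u v
  assume uv: "u \<in> gverts (cycle_square (m * n))" "v \<in> gverts (cycle_square (m * n))"
    and "u \<noteq> v \<and> (\<exists>k\<le>2 * r. (gadj (cycle_square (m * n)) ^^ k) u v)"
  then obtain k where "u \<noteq> v" "k \<le> 2 * r" "(gadj (cycle_square (m * n)) ^^ k) u v"
    by blast
  moreover have "2 * k < n"
    using \<open>k \<le> 2 * r\<close> assms(2) by linarith
  ultimately have "u mod n \<noteq> v mod n"
    using cycle_square_mod_inj_on_walk uv by (metis cycle_square_simps(1) lessThan_iff)
  then show "idf (u mod n) \<noteq> idf (v mod n)"
    using assms(1) by (auto dest: injD)
qed

lemma cycle_square_adj_mod_three:
  assumes "gadj (cycle_square (3 * n)) u v"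
  shows "u mod 3 \<noteq> v mod 3"
proof
  obtain d :: int where d: "d \<in> {-2, -1, 1, 2}" "[int v = int u + d] (mod int (3 * n))"
    using assms unfolding cycle_square_adj by blast
  have "[int v = int u + d] (mod 3)"
    using d(2) by (rule cong_dvd_modulus) simp
  moreover assume "u mod 3 = v mod 3"
  then have "[v = u] (mod 3)"
    by (simp add: cong_def)
  then have "[int v = int u] (mod 3)"
    using cong_int_iff[of v u 3] by simp
  ultimately have "[int u + d = int u] (mod 3)"
    by (metis cong_sym_eq cong_trans)
  then have "(3::int) dvd d"
    by (simp add: cong_add_lcancel_0 cong_0_iff)
  moreover have "\<not> (3::int) dvd d"
    using d(1) by auto
  ultimately show False
    by contradiction
qed

lemma cycle_square_three_colorable:
  assumes "n \<ge> 1"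
  shows "cycle_square (3 * n) \<in> three_colorable"
proof -
  have "wf_graph (cycle_square (3 * n))"
    using assms by (intro wf_cycle_square) simp
  moreover have "\<forall>u\<in>gverts (cycle_square (3 * n)). u mod 3 < (3::nat)"
    by simp
  moreover have "\<forall>u v. gadj (cycle_square (3 * n)) u v \<longrightarrow> u mod 3 \<noteq> v mod 3"
    using cycle_square_adj_mod_three by blast
  ultimately show ?thesis
    unfolding three_colorable_def mem_Collect_eq
    by (intro conjI exI[of _ "\<lambda>u. u mod 3"]) blast+
qed

lemma path_square_three_colouring_periodic:
  fixes g :: "nat \<Rightarrow> nat"
  assumes "\<And>i. g i < 3" "\<And>i. g i \<noteq> g (i + 1)" "\<And>i. g i \<noteq> g (i + 2)"
  shows "g i = g (i mod 3)"
proof (induction i rule: less_induct)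
  case (less i)
  show ?case
  proof (cases "i < 3")
    case False
    then obtain j where i: "i = j + 3"
      by (metis add.commute le_add_diff_inverse not_less)
    have shifts: "j + 1 + 1 = j + 2" "j + 1 + 2 = j + 3" "j + 2 + 1 = j + 3"
      by simp_all
    have "g (j + 3) = g j"
      using assms(1)[of j] assms(1)[of "j + 1"] assms(1)[of "j + 2"] assms(1)[of "j + 3"]
        assms(2)[of j] assms(2)[of "j + 1"] assms(2)[of "j + 2"]
        assms(3)[of j] assms(3)[of "j + 1"]
      unfolding shifts by linarith
    then show ?thesis
      using less.IH[of j] i by simp
  qed simp
qed

lemma cycle_square_adj_shift:
  assumes "N \<ge> 3" "c \<in> {1, 2}"
  shows "gadj (cycle_square N) (i mod N) ((i + c) mod N)"
proof -
  have "[int ((i + c) mod N) = int (i mod N) + int c] (mod int N)"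
    by (simp add: cong_def of_nat_mod mod_add_left_eq)
  moreover have "int c \<in> {-2, -1, 1, 2}"
    using assms(2) by auto
  ultimately show ?thesis
    using assms(1) unfolding cycle_square_adj by auto
qed

lemma cycle_square_not_three_colorable:
  assumes "N \<ge> 3" "\<not> 3 dvd N"
  shows "cycle_square N \<notin> three_colorable"
proof
  assume "cycle_square N \<in> three_colorable"
  then obtain f :: "nat \<Rightarrow> nat" where f: "\<forall>u<N. f u < 3"
    "\<forall>u v. gadj (cycle_square N) u v \<longrightarrow> f u \<noteq> f v"
    unfolding three_colorable_def by auto
  define g where "g i = f (i mod N)" for i
  have adj: "g i \<noteq> g (i + 1)" "g i \<noteq> g (i + 2)" for i
    using f(2) cycle_square_adj_shift[OF assms(1), of 1 i] cycle_square_adj_shift[OF assms(1), of 2 i]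
    by (auto simp: g_def)
  have "g i = g (i mod 3)" for i
    by (rule path_square_three_colouring_periodic)
      (use f(1) assms(1) adj in \<open>auto simp: g_def\<close>)
  then have "g (N mod 3) = g 0"
    by (metis g_def mod_self mod_0)
  moreover have "N mod 3 = 1 \<or> N mod 3 = 2"
    using assms(2) by presburger
  moreover have "g 0 \<noteq> g 1" "g 0 \<noteq> g 2"
    using adj[of 0] unfolding add_0 by blast+
  ultimately show False
    by auto
qed

theorem corollary9p2:
  shows "three_colorable \<notin> LP"
proof
  assume "three_colorable \<in> LP"
  then obtain M r where accepts_iff: "\<And>G idf. wf_graph G \<Longrightarrow> locally_unique r G idf \<Longrightarrow>
      accepts M G idf \<longleftrightarrow> G \<in> three_colorable"
    unfolding LP_def by blast
  \<comment> \<open>\<open>n > 4r\<close> and \<open>n mod 3 = 1\<close>\<close>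
  define n where "n = 6 * r + 7"
  define idf :: "nat \<Rightarrow> bool list" where "idf u = replicate u True" for u
  have "inj idf"
    by (rule injI) (metis idf_def length_replicate)
  interpret covering_with_ids "cycle_square (3 * n)" "cycle_square n" "\<lambda>x. x mod n" "\<lambda>x. idf (x mod n)" idf
    by unfold_locales
      (use cycle_square_covering[of n 3] cycle_square_sym \<open>inj idf\<close> in \<open>auto simp: n_def intro: inj_on_subset\<close>)
  have "locally_unique r (cycle_square (3 * n)) (\<lambda>x. idf (x mod n))"
    using cycle_square_locally_unique_mod[OF \<open>inj idf\<close>, of r n 3] by (simp add: n_def)
  moreover have "cycle_square (3 * n) \<in> three_colorable"
    using cycle_square_three_colorable[of n] by (simp add: n_def)
  ultimately have "accepts M (cycle_square (3 * n)) (\<lambda>x. idf (x mod n))"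
    using accepts_iff wf_cycle_square[of "3 * n"] by (simp add: n_def)
  then have "accepts M (cycle_square n) idf"
    by (rule accepts_project)
  then have "cycle_square n \<in> three_colorable"
    using accepts_iff[OF wf_cycle_square locally_unique_if_inj_on] \<open>inj idf\<close>
    by (simp add: n_def inj_on_subset)
  moreover have "cycle_square n \<notin> three_colorable"
    unfolding n_def by (intro cycle_square_not_three_colorable) presburger+
  ultimately show False
    by contradiction
qed

end
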